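(* Let $G$ be a path graph with $L=\lambda_1+\lambda_2$ edges, rooted at a vertex $O$ that is not an endpoint: there are $\lambda_1\ge1$ edges on one side of $O$ and $\lambda_2\ge1$ on the other. Let all edges have activation probability $p\in(0,1]$. Let $\varepsilon^*$ be the hider's distribution that puts probability $\lambda_1/L$ on the extreme (leaf) edge of the first side and $\lambda_2/L$ on the extreme edge of the second side. Then every depth-first strategy of the searcher is a best response to $\varepsilon^*$. Hence $\varepsilon^*$ and the uniform depth-first strategy form a pair of optimal strategies.
   Context: Setting: the stochastic search game on $G$. Every edge has length $1$ and is active at each stage independently with probability $p$. The hider chooses an edge and stays there. The searcher starts at $O$; at each stage, knowing which edges are currently active, she waits or traverses an active edge incident to her position. The hider's payoff is the expected first time the searcher traverses his edge. View the path as a tree rooted at $O$ with edges oriented away from $O$. A depth-first strategy (DFS) acts as follows at the searcher's current vertex: - if some untraversed outgoing edge is active, traverse one of them (possibly chosen at random); - if all untraversed outgoing edges are inactive, wait; - if all outgoing edges have been traversed, traverse the edge back toward $O$ when active, and wait otherwise. The uniform DFS chooses uniformly among the active untraversed outgoing edges. *)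

theory Defs
  imports "HOL-Probability.Probability"
begin

(* Path graph with l1 edges on side 1 and l2 edges on side 2, root O = vertex 0.
   Vertices: integers -l2 .. l1.  Edge j (j \<noteq> 0) joins vertex j (its far end,
   away from O) and vertex near j = j - sgn j (its end towards O).
   Edges: 1..l1 on side 1 (leaf edge l1), -1..-l2 on side 2 (leaf edge -l2). *)

definition edges :: "nat \<Rightarrow> nat \<Rightarrow> int set" where
  "edges l1 l2 = {- int l2 .. int l1} - {0}"

definition near :: "int \<Rightarrow> int" where
  "near j = j - sgn j"

definition act :: "nat \<Rightarrow> nat \<Rightarrow> real \<Rightarrow> (int \<Rightarrow> bool) pmf" where
  "act l1 l2 p = Pi_pmf (edges l1 l2) False (\<lambda>_. bernoulli_pmf p)"

(* an action: None = wait, Some j = traverse edge j;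
   a history: list of (active set of the stage, action taken at the stage) *)
type_synonym hist = "((int \<Rightarrow> bool) \<times> int option) list"

(* behavioural (possibly randomised) searcher strategy: from the past history and
   the currently active edges, a distribution over actions *)
type_synonym strategy = "hist \<Rightarrow> (int \<Rightarrow> bool) \<Rightarrow> int option pmf"

definition step :: "int \<Rightarrow> int option \<Rightarrow> int" where
  "step v a = (case a of None \<Rightarrow> v | Some j \<Rightarrow> (if v = j then near j else j))"

definition pos :: "hist \<Rightarrow> int" where
  "pos h = fold (\<lambda>x v. step v (snd x)) h 0"

definition traversed :: "hist \<Rightarrow> int set" where
  "traversed h = {j. Some j \<in> snd ` set h}"

definition legal_acts :: "nat \<Rightarrow> nat \<Rightarrow> hist \<Rightarrow> (int \<Rightarrow> bool) \<Rightarrow> int option set" where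
  "legal_acts l1 l2 h A =
     insert None (Some ` {j \<in> edges l1 l2. A j \<and> (pos h = j \<or> pos h = near j)})"

definition untrav_out :: "nat \<Rightarrow> nat \<Rightarrow> hist \<Rightarrow> int set" where
  "untrav_out l1 l2 h = {j \<in> edges l1 l2. near j = pos h \<and> j \<notin> traversed h}"

definition dfs_acts :: "nat \<Rightarrow> nat \<Rightarrow> hist \<Rightarrow> (int \<Rightarrow> bool) \<Rightarrow> int option set" where
  "dfs_acts l1 l2 h A =
     (let U = untrav_out l1 l2 h; v = pos h in
      if {j \<in> U. A j} \<noteq> {} then Some ` {j \<in> U. A j}
      else if U \<noteq> {} then {None}
      else if v = 0 then {None}
      else if A v then {Some v} else {None})"

fun hist_pmf :: "nat \<Rightarrow> nat \<Rightarrow> real \<Rightarrow> strategy \<Rightarrow> nat \<Rightarrow> hist pmf" where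
  "hist_pmf l1 l2 p \<sigma> 0 = return_pmf []"
| "hist_pmf l1 l2 p \<sigma> (Suc n) =
     bind_pmf (hist_pmf l1 l2 p \<sigma> n) (\<lambda>h.
       bind_pmf (act l1 l2 p) (\<lambda>A. map_pmf (\<lambda>a. h @ [(A, a)]) (\<sigma> h A)))"

definition reachable :: "nat \<Rightarrow> nat \<Rightarrow> real \<Rightarrow> strategy \<Rightarrow> hist \<Rightarrow> bool" where
  "reachable l1 l2 p \<sigma> h \<longleftrightarrow> (\<exists>n. h \<in> set_pmf (hist_pmf l1 l2 p \<sigma> n))"

definition admissible :: "nat \<Rightarrow> nat \<Rightarrow> real \<Rightarrow> strategy \<Rightarrow> bool" where
  "admissible l1 l2 p \<sigma> \<longleftrightarrow>
     (\<forall>h A. reachable l1 l2 p \<sigma> h \<longrightarrow> A \<in> set_pmf (act l1 l2 p) \<longrightarrow>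
        set_pmf (\<sigma> h A) \<subseteq> legal_acts l1 l2 h A)"

definition is_dfs :: "nat \<Rightarrow> nat \<Rightarrow> real \<Rightarrow> strategy \<Rightarrow> bool" where
  "is_dfs l1 l2 p \<sigma> \<longleftrightarrow>
     (\<forall>h A. reachable l1 l2 p \<sigma> h \<longrightarrow> A \<in> set_pmf (act l1 l2 p) \<longrightarrow>
        set_pmf (\<sigma> h A) \<subseteq> dfs_acts l1 l2 h A)"

definition uniform_dfs :: "nat \<Rightarrow> nat \<Rightarrow> strategy" where
  "uniform_dfs l1 l2 h A = pmf_of_set (dfs_acts l1 l2 h A)"

(* expected first time the searcher traverses edge e: E[T] = \<Sum>_{n\<ge>0} P(T > n) *)
definition exp_time :: "nat \<Rightarrow> nat \<Rightarrow> real \<Rightarrow> strategy \<Rightarrow> int \<Rightarrow> ennreal" where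
  "exp_time l1 l2 p \<sigma> e =
     (\<Sum>n. ennreal (measure_pmf.prob (hist_pmf l1 l2 p \<sigma> n) {h. e \<notin> traversed h}))"

definition payoff_eps :: "nat \<Rightarrow> nat \<Rightarrow> real \<Rightarrow> strategy \<Rightarrow> ennreal" where
  "payoff_eps l1 l2 p \<sigma> =
     ennreal (real l1 / real (l1 + l2)) * exp_time l1 l2 p \<sigma> (int l1)
   + ennreal (real l2 / real (l1 + l2)) * exp_time l1 l2 p \<sigma> (- int l2)"

end

theory Submission
  imports Defs
begin

text \<open>The value is \<open>V = 1 / (p * (2 - p)) + (L - 1) / p\<close>. Consider the expected remaining
  \<open>\<epsilon>*\<close>-weighted search time of a depth-first search as a potential of the searcher's vertex and
  of which leaf edges are already found. Because the weights are proportional to the side lengths,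
  finishing the current side and then the other costs the same from either side, so the potential
  is well defined and satisfies a Bellman equation: the weight of the hidden leaves plus the
  expected potential after the best reply to the active edges equals the current potential.
  Every legal move leaves at least that best reply's potential and every depth-first move leaves
  exactly it, so telescoping along the history shows that every strategy pays at least \<open>V\<close> and
  every depth-first strategy at most \<open>V\<close>. For the uniform depth-first strategy, a similar
  potential for a single edge \<open>e\<close> shows that \<open>e\<close> is found within expected time \<open>V\<close>.\<close>

section \<open>Histories and stage-by-stage potentials\<close>

lemma pos_Nil [simp]: "pos [] = 0"
  by (simp add: pos_def)

lemma pos_snoc [simp]: "pos (h @ [x]) = step (pos h) (snd x)"
  by (simp add: pos_def)

lemma traversed_Nil [simp]: "traversed [] = {}"
  by (simp add: traversed_def)

lemma traversed_snoc [simp]: "traversed (h @ [(A, a)]) = traversed h \<union> set_option a"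
  by (auto simp: traversed_def)

lemma step_None [simp]: "step v None = v"
  by (simp add: step_def)

lemma finite_edges [simp]: "finite (edges l1 l2)"
  by (simp add: edges_def)

lemma mem_edges: "j \<in> edges l1 l2 \<longleftrightarrow> - int l2 \<le> j \<and> j \<le> int l1 \<and> j \<noteq> 0"
  by (auto simp: edges_def)

lemma act_not_edge: "A \<in> set_pmf (act l1 l2 p) \<Longrightarrow> j \<notin> edges l1 l2 \<Longrightarrow> \<not> A j"
  using set_Pi_pmf_subset[of "edges l1 l2" False "\<lambda>_. bernoulli_pmf p"] by (auto simp: act_def)

lemma map_pmf_act_component:
  "j \<in> edges l1 l2 \<Longrightarrow> map_pmf (\<lambda>A. A j) (act l1 l2 p) = bernoulli_pmf p"
  by (simp add: act_def Pi_pmf_component)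

lemma map_pmf_act_pair:
  assumes "i \<in> edges l1 l2" "j \<in> edges l1 l2" "i \<noteq> j"
  shows "map_pmf (\<lambda>A. (A i, A j)) (act l1 l2 p) = pair_pmf (bernoulli_pmf p) (bernoulli_pmf p)"
proof -
  define R where "R = edges l1 l2 - {i}"
  have R: "edges l1 l2 = insert i R" "i \<notin> R" "finite R" "j \<in> R"
    using assms by (auto simp: R_def)
  have "act l1 l2 p = map_pmf (\<lambda>(a, f). f(i := a))
      (pair_pmf (bernoulli_pmf p) (Pi_pmf R False (\<lambda>_. bernoulli_pmf p)))"
    unfolding act_def R(1) by (rule Pi_pmf_insert) (use R in auto)
  hence "map_pmf (\<lambda>A. (A i, A j)) (act l1 l2 p) =
      pair_pmf (bernoulli_pmf p) (map_pmf (\<lambda>f. f j) (Pi_pmf R False (\<lambda>_. bernoulli_pmf p)))"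
    using assms by (simp add: pmf.map_comp o_def case_prod_unfold pair_map_pmf2 map_prod_def apsnd_def)
  also have "map_pmf (\<lambda>f. f j) (Pi_pmf R False (\<lambda>_. bernoulli_pmf p)) = bernoulli_pmf p"
    using R by (simp add: Pi_pmf_component)
  finally show ?thesis .
qed

lemma nn_integral_act_component:
  fixes g :: "bool \<Rightarrow> real"
  assumes "j \<in> edges l1 l2" "0 \<le> p" "p \<le> 1" "\<And>b. 0 \<le> g b"
  shows "(\<integral>\<^sup>+A. ennreal (g (A j)) \<partial>act l1 l2 p) = ennreal (p * g True + (1 - p) * g False)"
proof -
  have "(\<integral>\<^sup>+A. ennreal (g (A j)) \<partial>act l1 l2 p) =
      (\<integral>\<^sup>+b. ennreal (g b) \<partial>map_pmf (\<lambda>A. A j) (act l1 l2 p))"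
    by simp
  also have "\<dots> = ennreal (g True) * ennreal p + ennreal (g False) * ennreal (1 - p)"
    using assms by (simp add: map_pmf_act_component)
  finally show ?thesis
    using assms by (simp add: ennreal_plus ennreal_mult mult.commute)
qed

lemma nn_integral_act_pair:
  fixes g :: "bool \<Rightarrow> bool \<Rightarrow> real"
  assumes "i \<in> edges l1 l2" "j \<in> edges l1 l2" "i \<noteq> j" "0 \<le> p" "p \<le> 1"
    and "\<And>a b. 0 \<le> g a b"
  shows "(\<integral>\<^sup>+A. ennreal (g (A i) (A j)) \<partial>act l1 l2 p) =
    ennreal (p * (p * g True True + (1 - p) * g True False)
      + (1 - p) * (p * g False True + (1 - p) * g False False))"
proof -
  have "(\<integral>\<^sup>+A. ennreal (g (A i) (A j)) \<partial>act l1 l2 p) =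
      (\<integral>\<^sup>+z. ennreal (g (fst z) (snd z)) \<partial>map_pmf (\<lambda>A. (A i, A j)) (act l1 l2 p))"
    by simp
  also have "\<dots> = (\<integral>\<^sup>+a. \<integral>\<^sup>+b. ennreal (g a b) \<partial>bernoulli_pmf p \<partial>bernoulli_pmf p)"
    unfolding map_pmf_act_pair[OF assms(1-3)] by (simp add: nn_integral_pair_pmf')
  finally show ?thesis
    using assms by (simp add: ennreal_plus ennreal_mult mult.commute
        add_nonneg_nonneg mult_nonneg_nonneg)
qed

lemma reachable_if_in_hist_pmf: "h \<in> set_pmf (hist_pmf l1 l2 p \<sigma> n) \<Longrightarrow> reachable l1 l2 p \<sigma> h"
  unfolding reachable_def by blast

lemma reachable_induct [consumes 1, case_names Nil snoc]:
  assumes "reachable l1 l2 p \<sigma> h" and "P []"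
    and "\<And>h A a. reachable l1 l2 p \<sigma> h \<Longrightarrow> P h \<Longrightarrow> A \<in> set_pmf (act l1 l2 p) \<Longrightarrow>
           a \<in> set_pmf (\<sigma> h A) \<Longrightarrow> P (h @ [(A, a)])"
  shows "P h"
proof -
  obtain n where "h \<in> set_pmf (hist_pmf l1 l2 p \<sigma> n)"
    using assms(1) by (auto simp: reachable_def)
  thus ?thesis
  proof (induction n arbitrary: h)
    case 0
    thus ?case using assms(2) by simp
  next
    case (Suc n)
    then obtain h0 A a where "h = h0 @ [(A, a)]" "h0 \<in> set_pmf (hist_pmf l1 l2 p \<sigma> n)"
      "A \<in> set_pmf (act l1 l2 p)" "a \<in> set_pmf (\<sigma> h0 A)"
      by auto
    thus ?case using Suc.IH assms(3) reachable_if_in_hist_pmf by blast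
  qed
qed

lemma sum_cost_plus_potential_le:
  assumes "\<And>h. reachable l1 l2 p \<sigma> h \<Longrightarrow>
      c h + (\<integral>\<^sup>+A. \<integral>\<^sup>+a. F (h @ [(A, a)]) \<partial>\<sigma> h A \<partial>act l1 l2 p) \<le> F h"
  shows "(\<Sum>k<n. \<integral>\<^sup>+h. c h \<partial>hist_pmf l1 l2 p \<sigma> k) + (\<integral>\<^sup>+h. F h \<partial>hist_pmf l1 l2 p \<sigma> n) \<le> F []"
proof (induction n)
  case 0
  thus ?case by simp
next
  case (Suc n)
  let ?M = "hist_pmf l1 l2 p \<sigma> n"
  have "(\<integral>\<^sup>+h. c h \<partial>?M) + (\<integral>\<^sup>+h. F h \<partial>hist_pmf l1 l2 p \<sigma> (Suc n)) =
      (\<integral>\<^sup>+h. c h + (\<integral>\<^sup>+A. \<integral>\<^sup>+a. F (h @ [(A, a)]) \<partial>\<sigma> h A \<partial>act l1 l2 p) \<partial>?M)"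
    by (simp add: nn_integral_add)
  also have "\<dots> \<le> (\<integral>\<^sup>+h. F h \<partial>?M)"
    by (rule nn_integral_mono_AE)
      (auto simp: AE_measure_pmf_iff intro!: assms reachable_if_in_hist_pmf)
  finally have "(\<integral>\<^sup>+h. c h \<partial>?M) + (\<integral>\<^sup>+h. F h \<partial>hist_pmf l1 l2 p \<sigma> (Suc n)) \<le> (\<integral>\<^sup>+h. F h \<partial>?M)" .
  hence "(\<Sum>k<Suc n. \<integral>\<^sup>+h. c h \<partial>hist_pmf l1 l2 p \<sigma> k) + (\<integral>\<^sup>+h. F h \<partial>hist_pmf l1 l2 p \<sigma> (Suc n))
      \<le> (\<Sum>k<n. \<integral>\<^sup>+h. c h \<partial>hist_pmf l1 l2 p \<sigma> k) + (\<integral>\<^sup>+h. F h \<partial>?M)"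
    by (simp add: add.assoc add_left_mono)
  thus ?case using Suc.IH by order
qed

lemma sum_cost_plus_potential_ge:
  assumes "\<And>h. reachable l1 l2 p \<sigma> h \<Longrightarrow>
      F h \<le> c h + (\<integral>\<^sup>+A. \<integral>\<^sup>+a. F (h @ [(A, a)]) \<partial>\<sigma> h A \<partial>act l1 l2 p)"
  shows "F [] \<le> (\<Sum>k<n. \<integral>\<^sup>+h. c h \<partial>hist_pmf l1 l2 p \<sigma> k) + (\<integral>\<^sup>+h. F h \<partial>hist_pmf l1 l2 p \<sigma> n)"
proof (induction n)
  case 0
  thus ?case by simp
next
  case (Suc n)
  let ?M = "hist_pmf l1 l2 p \<sigma> n"
  have "(\<integral>\<^sup>+h. F h \<partial>?M) \<le>
      (\<integral>\<^sup>+h. c h + (\<integral>\<^sup>+A. \<integral>\<^sup>+a. F (h @ [(A, a)]) \<partial>\<sigma> h A \<partial>act l1 l2 p) \<partial>?M)"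
    by (rule nn_integral_mono_AE)
      (auto simp: AE_measure_pmf_iff intro!: assms reachable_if_in_hist_pmf)
  also have "\<dots> = (\<integral>\<^sup>+h. c h \<partial>?M) + (\<integral>\<^sup>+h. F h \<partial>hist_pmf l1 l2 p \<sigma> (Suc n))"
    by (simp add: nn_integral_add)
  finally have "(\<integral>\<^sup>+h. F h \<partial>?M) \<le> (\<integral>\<^sup>+h. c h \<partial>?M) + (\<integral>\<^sup>+h. F h \<partial>hist_pmf l1 l2 p \<sigma> (Suc n))" .
  hence "(\<Sum>k<n. \<integral>\<^sup>+h. c h \<partial>hist_pmf l1 l2 p \<sigma> k) + (\<integral>\<^sup>+h. F h \<partial>?M)
      \<le> (\<Sum>k<Suc n. \<integral>\<^sup>+h. c h \<partial>hist_pmf l1 l2 p \<sigma> k) + (\<integral>\<^sup>+h. F h \<partial>hist_pmf l1 l2 p \<sigma> (Suc n))"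
    by (simp add: add.assoc add_left_mono)
  thus ?case using Suc.IH by order
qed

lemma suminf_cost_le_potential:
  assumes "\<And>h. reachable l1 l2 p \<sigma> h \<Longrightarrow>
      c h + (\<integral>\<^sup>+A. \<integral>\<^sup>+a. F (h @ [(A, a)]) \<partial>\<sigma> h A \<partial>act l1 l2 p) \<le> F h"
  shows "(\<Sum>k. \<integral>\<^sup>+h. c h \<partial>hist_pmf l1 l2 p \<sigma> k) \<le> F []"
  unfolding suminf_eq_SUP
proof (rule SUP_least)
  fix n
  have "(\<Sum>k<n. \<integral>\<^sup>+h. c h \<partial>hist_pmf l1 l2 p \<sigma> k) \<le>
      (\<Sum>k<n. \<integral>\<^sup>+h. c h \<partial>hist_pmf l1 l2 p \<sigma> k) + (\<integral>\<^sup>+h. F h \<partial>hist_pmf l1 l2 p \<sigma> n)"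
    by simp
  also have "\<dots> \<le> F []"
    by (rule sum_cost_plus_potential_le[OF assms])
  finally show "(\<Sum>k<n. \<integral>\<^sup>+h. c h \<partial>hist_pmf l1 l2 p \<sigma> k) \<le> F []" .
qed

lemma exp_time_eq_suminf_nn_integral:
  "exp_time l1 l2 p \<sigma> e =
    (\<Sum>n. \<integral>\<^sup>+h. indicator {h. e \<notin> traversed h} h \<partial>hist_pmf l1 l2 p \<sigma> n)"
  unfolding exp_time_def by (simp add: measure_pmf.emeasure_eq_measure[symmetric])

lemma ennreal_le_suminf_of_le_partial_sums:
  fixes r :: "nat \<Rightarrow> real"
  assumes r: "\<And>k. 0 \<le> r k" and K: "0 \<le> K"
    and bound: "\<And>n. ennreal x \<le> (\<Sum>k<n. ennreal (r k)) + ennreal K * ennreal (r n)"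
  shows "ennreal x \<le> (\<Sum>k. ennreal (r k))"
proof (cases "(\<Sum>k. ennreal (r k)) = top")
  case False
  have r_summable: "summable r"
    by (rule summable_suminf_not_top[OF r False])
  have "x \<le> suminf r + K * r n" for n
  proof -
    have "ennreal x \<le> ennreal ((\<Sum>k<n. r k) + K * r n)"
      using bound[of n] r K by (simp add: ennreal_plus sum_nonneg ennreal_mult sum_ennreal)
    hence "x \<le> (\<Sum>k<n. r k) + K * r n"
      using r K by (subst (asm) ennreal_le_iff) (auto intro!: add_nonneg_nonneg sum_nonneg)
    moreover have "(\<Sum>k<n. r k) \<le> suminf r"
      using r_summable r by (intro sum_le_suminf) auto
    ultimately show ?thesis by linarith
  qed
  moreover have "(\<lambda>n. suminf r + K * r n) \<longlonglongrightarrow> suminf r + K * 0"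
    by (intro tendsto_intros summable_LIMSEQ_zero r_summable)
  ultimately have "x \<le> suminf r"
    using tendsto_lowerbound by fastforce
  thus ?thesis
    using suminf_ennreal2[OF r r_summable] by (simp add: ennreal_leI)
qed simp

lemma one_plus_ennreal_diff: "1 \<le> x \<Longrightarrow> 1 + ennreal (x - 1) = ennreal x"
  by (subst ennreal_1[symmetric], subst ennreal_plus[symmetric]) auto

lemma dfs_acts_finite: "finite (dfs_acts l1 l2 h A)"
  by (auto simp: dfs_acts_def Let_def untrav_out_def)

lemma dfs_acts_nonempty: "dfs_acts l1 l2 h A \<noteq> {}"
  by (auto simp: dfs_acts_def Let_def)

lemma is_dfs_uniform_dfs: "is_dfs l1 l2 p (uniform_dfs l1 l2)"
  unfolding is_dfs_def uniform_dfs_def using dfs_acts_finite dfs_acts_nonempty by simp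

lemma dfs_acts_subset_legal_acts:
  assumes "A \<in> set_pmf (act l1 l2 p)"
  shows "dfs_acts l1 l2 h A \<subseteq> legal_acts l1 l2 h A"
proof
  fix a assume a: "a \<in> dfs_acts l1 l2 h A"
  have "A (pos h) \<Longrightarrow> pos h \<in> edges l1 l2"
    using act_not_edge[OF assms] by blast
  thus "a \<in> legal_acts l1 l2 h A"
    using a unfolding dfs_acts_def legal_acts_def untrav_out_def Let_def by (auto split: if_splits)
qed

lemma admissible_if_is_dfs: "is_dfs l1 l2 p \<sigma> \<Longrightarrow> admissible l1 l2 p \<sigma>"
  unfolding is_dfs_def admissible_def using dfs_acts_subset_legal_acts by blast

section \<open>A potential for the hider distribution \<open>\<epsilon>*\<close>\<close>

locale path_search =
  fixes l1 l2 :: nat and p :: real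
  assumes l1_ge_1: "1 \<le> l1" and l2_ge_1: "1 \<le> l2" and p_pos: "0 < p" and p_le_1: "p \<le> 1"
begin

definition L :: real where "L = real (l1 + l2)"
definition w1 :: real where "w1 = real l1 / L"
definition w2 :: real where "w2 = real l2 / L"

text \<open>\<open>1 / (p * (2 - p))\<close> is the expected wait at \<open>O\<close> until one of its two edges is active.\<close>
definition game_value :: real where "game_value = 1 / (p * (2 - p)) + (L - 1) / p"

text \<open>The \<open>\<epsilon>*\<close>-weighted expected remaining search time when a depth-first search continues from
  vertex \<open>v\<close>, where \<open>f1\<close>, \<open>f2\<close> record whether the leaf edges \<open>l1\<close>, \<open>-l2\<close> have been traversed:
  each edge costs \<open>1 / p\<close> stages in expectation, at rate \<open>w\<^sub>i\<close> once only leaf \<open>i\<close> is hidden.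
  Because \<open>w\<^sub>i * L = l\<^sub>i\<close>, finishing the current side and then the other one from \<open>v \<noteq> 0\<close> costs
  \<open>(L - \<bar>v\<bar>) / p\<close> on either side.\<close>
definition potential :: "int \<Rightarrow> bool \<Rightarrow> bool \<Rightarrow> real" where
  "potential v f1 f2 =
    (if f1 \<and> f2 then 0
     else if f1 then w2 * (real_of_int v + real l2) / p
     else if f2 then w1 * (real l1 - real_of_int v) / p
     else if v = 0 then game_value
     else (L - real_of_int \<bar>v\<bar>) / p)"

definition cost :: "bool \<Rightarrow> bool \<Rightarrow> real" where
  "cost f1 f2 = (if f1 then 0 else w1) + (if f2 then 0 else w2)"

text \<open>The edge a depth-first search traverses next, outside the start and the end of the search:
  towards the one hidden leaf, or deeper into the current side.\<close>
definition next_edge :: "int \<Rightarrow> bool \<Rightarrow> bool \<Rightarrow> int" where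
  "next_edge v f1 f2 =
    (if f1 then (if v > 0 then v else v - 1)
     else if f2 then (if v < 0 then v else v + 1)
     else if v > 0 then v + 1 else v - 1)"

definition potential_after :: "int \<Rightarrow> bool \<Rightarrow> bool \<Rightarrow> int option \<Rightarrow> real" where
  "potential_after v f1 f2 a =
    potential (step v a) (f1 \<or> a = Some (int l1)) (f2 \<or> a = Some (- int l2))"

definition best_potential :: "int \<Rightarrow> bool \<Rightarrow> bool \<Rightarrow> (int \<Rightarrow> bool) \<Rightarrow> real" where
  "best_potential v f1 f2 A =
    (if \<not> f1 \<and> \<not> f2 \<and> v = 0 then (if A 1 \<or> A (-1) then (L - 1) / p else game_value)
     else if A (next_edge v f1 f2) then potential_after v f1 f2 (Some (next_edge v f1 f2))
     else potential v f1 f2)"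

definition valid_state :: "int \<Rightarrow> bool \<Rightarrow> bool \<Rightarrow> bool" where
  "valid_state v f1 f2 \<longleftrightarrow>
    - int l2 \<le> v \<and> v \<le> int l1 \<and> (v = int l1 \<longrightarrow> f1) \<and> (v = - int l2 \<longrightarrow> f2)"

lemma L_eq: "L = real l1 + real l2"
  by (simp add: L_def)

lemma L_pos: "0 < L"
  using l1_ge_1 by (simp add: L_eq)

lemma w1_times_L: "w1 * L = real l1" and w2_times_L: "w2 * L = real l2"
  using L_pos by (simp_all add: w1_def w2_def)

lemma w1_nonneg: "0 \<le> w1" and w2_nonneg: "0 \<le> w2"
  using L_pos by (simp_all add: w1_def w2_def)

lemma w1_plus_w2: "w1 + w2 = 1"
  using L_pos by (simp add: w1_def w2_def L_eq add_divide_distrib[symmetric])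

lemma game_value_ge: "(L - 1) / p \<le> game_value"
  using p_pos p_le_1 by (simp add: game_value_def)

lemma L_minus_1_over_p_nonneg: "0 \<le> (L - 1) / p"
  using p_pos l1_ge_1 by (simp add: L_eq)

lemma game_value_nonneg: "0 \<le> game_value"
  using game_value_ge L_minus_1_over_p_nonneg by linarith

lemma one_le_expected_root_wait: "1 \<le> 1 / (p * (2 - p))"
proof -
  have "1 - p * (2 - p) = (1 - p)\<^sup>2"
    by (simp add: power2_eq_square algebra_simps)
  hence "p * (2 - p) \<le> 1"
    using zero_le_power2[of "1 - p"] by linarith
  moreover have "0 < p * (2 - p)"
    using p_pos p_le_1 by simp
  ultimately show ?thesis by simp
qed

lemma game_value_ge_1: "1 \<le> game_value"
  using one_le_expected_root_wait L_minus_1_over_p_nonneg by (simp add: game_value_def)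

lemma cost_nonneg: "0 \<le> cost f1 f2"
  using w1_nonneg w2_nonneg by (simp add: cost_def)

lemma cost_le_1: "cost f1 f2 \<le> 1"
  using w1_plus_w2 w1_nonneg w2_nonneg by (auto simp: cost_def)

lemma potential_found_1:
  "- int l2 \<le> v \<Longrightarrow> \<not> f2 \<Longrightarrow> potential v True (f2 \<or> v = - int l2) = w2 * (real_of_int v + real l2) / p"
  by (auto simp: potential_def)

lemma potential_found_2:
  "v \<le> int l1 \<Longrightarrow> \<not> f1 \<Longrightarrow> potential v (f1 \<or> v = int l1) True = w1 * (real l1 - real_of_int v) / p"
  by (auto simp: potential_def)

lemma potential_unfound:
  assumes "- int l2 \<le> v" "v \<le> int l1"
  shows "potential v (v = int l1) (v = - int l2) =
    (if v = 0 then game_value else (L - real_of_int \<bar>v\<bar>) / p)"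
  using assms l1_ge_1 l2_ge_1 w1_times_L w2_times_L by (auto simp: potential_def L_eq)

lemma potential_nonneg: "valid_state v f1 f2 \<Longrightarrow> 0 \<le> potential v f1 f2"
  using game_value_nonneg L_pos p_pos w1_nonneg w2_nonneg
  by (auto simp: potential_def valid_state_def L_eq intro!: divide_nonneg_pos mult_nonneg_nonneg)

lemma potential_le_game_value:
  assumes "valid_state v f1 f2"
  shows "potential v f1 f2 \<le> game_value"
proof -
  have "w2 * (real_of_int v + real l2) \<le> w2 * L" "w1 * (real l1 - real_of_int v) \<le> w1 * L"
    using assms w1_nonneg w2_nonneg by (auto intro!: mult_left_mono simp: valid_state_def L_eq)
  hence "w2 * (real_of_int v + real l2) / p \<le> (L - 1) / p"
    "w1 * (real l1 - real_of_int v) / p \<le> (L - 1) / p"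
    using w1_times_L w2_times_L l1_ge_1 l2_ge_1 p_pos by (simp_all add: divide_right_mono L_eq)
  moreover have "v \<noteq> 0 \<Longrightarrow> (L - real_of_int \<bar>v\<bar>) / p \<le> (L - 1) / p"
    using p_pos by (simp add: divide_right_mono)
  ultimately show ?thesis
    using game_value_ge game_value_nonneg unfolding potential_def by auto
qed

text \<open>Every hidden leaf has weight at least \<open>1 / L\<close>, so the potential left after \<open>n\<close> stages is
  bounded by a multiple of the \<open>n\<close>-th term of the payoff series.\<close>
lemma potential_le_cost:
  assumes "valid_state v f1 f2"
  shows "potential v f1 f2 \<le> L * game_value * cost f1 f2"
proof (cases "f1 \<and> f2")
  case False
  have "1 / L \<le> w1" "1 / L \<le> w2"
    using l1_ge_1 l2_ge_1 L_pos by (auto simp: w1_def w2_def divide_right_mono)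
  hence "1 / L \<le> cost f1 f2"
    using False w1_nonneg w2_nonneg by (auto simp: cost_def)
  have "game_value \<le> L * game_value * cost f1 f2"
  proof -
    have "game_value = L * game_value * (1 / L)" using L_pos by simp
    also have "\<dots> \<le> L * game_value * cost f1 f2"
      using \<open>1 / L \<le> cost f1 f2\<close> game_value_nonneg L_pos by (intro mult_left_mono) auto
    finally show ?thesis .
  qed
  thus ?thesis using potential_le_game_value[OF assms] by linarith
qed (simp add: potential_def cost_def)

lemma step_Some_flags:
  assumes "valid_state v f1 f2" "j \<in> edges l1 l2" "v = j \<or> v = near j"
  shows "(f1 \<or> j = int l1) = (f1 \<or> step v (Some j) = int l1)"
    and "(f2 \<or> j = - int l2) = (f2 \<or> step v (Some j) = - int l2)"
proof -
  have "1 \<le> int l1" "1 \<le> int l2" using l1_ge_1 l2_ge_1 by simp_all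
  thus "(f1 \<or> j = int l1) = (f1 \<or> step v (Some j) = int l1)"
    "(f2 \<or> j = - int l2) = (f2 \<or> step v (Some j) = - int l2)"
    using assms by (auto simp: valid_state_def step_def mem_edges near_def sgn_if)
qed

lemma valid_state_step:
  assumes "valid_state v f1 f2" "j \<in> edges l1 l2" "v = j \<or> v = near j"
  shows "valid_state (step v (Some j)) (f1 \<or> j = int l1) (f2 \<or> j = - int l2)"
proof -
  have "1 \<le> int l1" "1 \<le> int l2" using l1_ge_1 l2_ge_1 by simp_all
  thus ?thesis using assms by (auto simp: valid_state_def step_def mem_edges near_def sgn_if)
qed

lemma potential_after_None [simp]: "potential_after v f1 f2 None = potential v f1 f2"
  by (simp add: potential_after_def)

lemma potential_after_Some_nonneg:
  "valid_state v f1 f2 \<Longrightarrow> j \<in> edges l1 l2 \<Longrightarrow> v = j \<or> v = near j \<Longrightarrow>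
    0 \<le> potential_after v f1 f2 (Some j)"
  unfolding potential_after_def using potential_nonneg[OF valid_state_step[of v f1 f2 j]] by simp

lemma potential_after_Some:
  assumes "valid_state v f1 f2" "j \<in> edges l1 l2" "v = j \<or> v = near j"
  shows "potential_after v f1 f2 (Some j) =
    potential (step v (Some j)) (f1 \<or> step v (Some j) = int l1) (f2 \<or> step v (Some j) = - int l2)"
  using step_Some_flags[OF assms] by (simp add: potential_after_def)

lemma next_edge_mem_edges:
  assumes "valid_state v f1 f2" "\<not> (f1 \<and> f2)" "\<not> (\<not> f1 \<and> \<not> f2 \<and> v = 0)"
  shows "next_edge v f1 f2 \<in> edges l1 l2"
    and "v = next_edge v f1 f2 \<or> v = near (next_edge v f1 f2)"
  using assms l1_ge_1 l2_ge_1 by (auto simp: next_edge_def valid_state_def mem_edges near_def)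

lemma step_next_edge:
  assumes "valid_state v f1 f2" "\<not> (f1 \<and> f2)" "\<not> (\<not> f1 \<and> \<not> f2 \<and> v = 0)"
  shows "step v (Some (next_edge v f1 f2)) =
    (if f1 then v - 1 else if f2 then v + 1 else if v > 0 then v + 1 else v - 1)"
  using assms by (auto simp: next_edge_def step_def near_def)

lemma step_Some_neighbour:
  "j \<in> edges l1 l2 \<Longrightarrow> v = j \<or> v = near j \<Longrightarrow> step v (Some j) = v + 1 \<or> step v (Some j) = v - 1"
  by (cases "j > 0") (auto simp: step_def near_def mem_edges)

lemma step_Some_inj:
  assumes "i \<in> edges l1 l2" "v = i \<or> v = near i" "j \<in> edges l1 l2" "v = j \<or> v = near j"
    and "step v (Some i) = step v (Some j)"
  shows "i = j"
  using assms by (auto simp: step_def near_def mem_edges sgn_if split: if_splits)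

text \<open>The flag update of a move never changes the potential while a leaf is still hidden: with
  one leaf found the potential does not depend on the other flag, and with none found the
  potential at a leaf vertex coincides with that of the found-leaf branch because
  \<open>w\<^sub>i * L = l\<^sub>i\<close>.\<close>
lemma potential_after_Some_eq:
  assumes "valid_state v f1 f2" "\<not> (f1 \<and> f2)" "j \<in> edges l1 l2" "v = j \<or> v = near j"
  shows "potential_after v f1 f2 (Some j) = potential (step v (Some j)) f1 f2"
proof -
  let ?u = "step v (Some j)"
  have u: "- int l2 \<le> ?u" "?u \<le> int l1"
    using valid_state_step[OF assms(1,3,4)] by (auto simp: valid_state_def)
  have after: "potential_after v f1 f2 (Some j) = potential ?u (f1 \<or> ?u = int l1) (f2 \<or> ?u = - int l2)"
    by (rule potential_after_Some[OF assms(1,3,4)])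
  consider "f1" "\<not> f2" | "\<not> f1" "f2" | "\<not> f1" "\<not> f2"
    using assms(2) by blast
  thus ?thesis
  proof cases
    case 1
    thus ?thesis using after u potential_found_1[of ?u f2] by (simp add: potential_def)
  next
    case 2
    thus ?thesis using after u potential_found_2[of ?u f1] by (simp add: potential_def)
  next
    case 3
    thus ?thesis using after u potential_unfound[of ?u] by (simp add: potential_def)
  qed
qed

lemma potential_after_next_edge:
  assumes "valid_state v f1 f2" "\<not> (f1 \<and> f2)" "\<not> (\<not> f1 \<and> \<not> f2 \<and> v = 0)"
  shows "potential_after v f1 f2 (Some (next_edge v f1 f2)) = potential v f1 f2 - cost f1 f2 / p"
proof -
  have "cost True False = w2" "cost False True = w1" "cost False False = 1"
    using w1_plus_w2 by (simp_all add: cost_def)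
  thus ?thesis
    using potential_after_Some_eq[OF assms(1,2) next_edge_mem_edges[OF assms]] step_next_edge[OF assms]
      assms(2,3) p_pos
    by (auto simp: potential_def field_simps)
qed

lemma step_other_edge:
  assumes "valid_state v f1 f2" "\<not> (f1 \<and> f2)" "\<not> (\<not> f1 \<and> \<not> f2 \<and> v = 0)"
    and "j \<in> edges l1 l2" "v = j \<or> v = near j" "j \<noteq> next_edge v f1 f2"
  shows "step v (Some j) = (if f1 then v + 1 else if f2 then v - 1 else if v > 0 then v - 1 else v + 1)"
proof -
  have "step v (Some j) \<noteq> step v (Some (next_edge v f1 f2))"
    using step_Some_inj[OF assms(4,5) next_edge_mem_edges[OF assms(1-3)]] assms(6) by blast
  moreover have "step v (Some j) = v + 1 \<or> step v (Some j) = v - 1"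
    by (rule step_Some_neighbour[OF assms(4,5)])
  ultimately show ?thesis
    using step_next_edge[OF assms(1-3)] assms(2,3) by (auto split: if_splits)
qed

lemma potential_after_other_edge:
  assumes "valid_state v f1 f2" "\<not> (f1 \<and> f2)" "\<not> (\<not> f1 \<and> \<not> f2 \<and> v = 0)"
    and "j \<in> edges l1 l2" "v = j \<or> v = near j" "j \<noteq> next_edge v f1 f2"
  shows "potential v f1 f2 \<le> potential_after v f1 f2 (Some j)"
  using potential_after_Some_eq[OF assms(1,2,4,5)] step_other_edge[OF assms] assms(2,3)
    w1_nonneg w2_nonneg p_pos game_value_ge
  by (cases "v = 1"; cases "v = -1") (auto simp: potential_def divide_right_mono mult_left_mono)

lemma potential_after_root: "j = 1 \<or> j = -1 \<Longrightarrow> potential_after 0 False False (Some j) = (L - 1) / p"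
  using l1_ge_1 l2_ge_1 potential_unfound[of j] by (auto simp: potential_after_def step_def)

lemma best_potential_non_root:
  "\<not> (\<not> f1 \<and> \<not> f2 \<and> v = 0) \<Longrightarrow> best_potential v f1 f2 A =
    (if A (next_edge v f1 f2) then potential_after v f1 f2 (Some (next_edge v f1 f2))
     else potential v f1 f2)"
  unfolding best_potential_def by argo

lemma expected_best_potential_root:
  "(\<integral>\<^sup>+A. ennreal (best_potential 0 False False A) \<partial>act l1 l2 p) = ennreal (game_value - 1)"
proof -
  have edges: "1 \<in> edges l1 l2" "-1 \<in> edges l1 l2"
    using l1_ge_1 l2_ge_1 by (auto simp: mem_edges)
  have "(\<integral>\<^sup>+A. ennreal (best_potential 0 False False A) \<partial>act l1 l2 p) =
      (\<integral>\<^sup>+A. ennreal ((\<lambda>a b. if a \<or> b then (L - 1) / p else game_value) (A 1) (A (-1)))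
        \<partial>act l1 l2 p)"
    by (simp add: best_potential_def)
  also have "\<dots> = ennreal (p * (p * ((L - 1) / p) + (1 - p) * ((L - 1) / p))
      + (1 - p) * (p * ((L - 1) / p) + (1 - p) * game_value))"
    using L_minus_1_over_p_nonneg game_value_nonneg p_pos p_le_1
    by (subst nn_integral_act_pair[OF edges]) auto
  also have "p * (p * ((L - 1) / p) + (1 - p) * ((L - 1) / p))
      + (1 - p) * (p * ((L - 1) / p) + (1 - p) * game_value) = game_value - 1"
    using p_pos p_le_1 by (simp add: game_value_def field_simps)
  finally show ?thesis .
qed

lemma expected_best_potential_search:
  assumes "valid_state v f1 f2" "\<not> (f1 \<and> f2)" "\<not> (\<not> f1 \<and> \<not> f2 \<and> v = 0)"
  shows "(\<integral>\<^sup>+A. ennreal (best_potential v f1 f2 A) \<partial>act l1 l2 p) =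
    ennreal (potential v f1 f2 - cost f1 f2)"
proof -
  let ?t = "next_edge v f1 f2" and ?P = "potential v f1 f2" and ?c = "cost f1 f2"
  have t: "?t \<in> edges l1 l2" "v = ?t \<or> v = near ?t"
    by (rule next_edge_mem_edges[OF assms])+
  have after: "potential_after v f1 f2 (Some ?t) = ?P - ?c / p"
    by (rule potential_after_next_edge[OF assms])
  have nonneg: "0 \<le> ?P - ?c / p" "0 \<le> ?P"
    using potential_after_Some_nonneg[OF assms(1) t] after potential_nonneg[OF assms(1)] by simp_all
  have "(\<integral>\<^sup>+A. ennreal (best_potential v f1 f2 A) \<partial>act l1 l2 p) =
      (\<integral>\<^sup>+A. ennreal ((\<lambda>b. if b then ?P - ?c / p else ?P) (A ?t)) \<partial>act l1 l2 p)"
    using assms(3) by (simp add: best_potential_non_root after cong: if_cong)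
  also have "\<dots> = ennreal (p * (?P - ?c / p) + (1 - p) * ?P)"
    using nonneg p_pos p_le_1 by (subst nn_integral_act_component[OF t(1)]) auto
  also have "p * (?P - ?c / p) + (1 - p) * ?P = ?P - ?c"
    using p_pos by (simp add: field_simps)
  finally show ?thesis .
qed

lemma cost_plus_expected_best_potential:
  assumes "valid_state v f1 f2"
  shows "ennreal (cost f1 f2) + (\<integral>\<^sup>+A. ennreal (best_potential v f1 f2 A) \<partial>act l1 l2 p) =
    ennreal (potential v f1 f2)"
proof -
  consider "f1 \<and> f2" | "\<not> f1 \<and> \<not> f2 \<and> v = 0" | "\<not> (f1 \<and> f2)" "\<not> (\<not> f1 \<and> \<not> f2 \<and> v = 0)"
    by blast
  thus ?thesis
  proof cases
    case 1
    hence "best_potential v f1 f2 A = 0" for A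
      by (simp add: best_potential_def potential_after_def potential_def)
    thus ?thesis using 1 by (simp add: potential_def cost_def)
  next
    case 2
    thus ?thesis
      using expected_best_potential_root one_plus_ennreal_diff[OF game_value_ge_1] w1_plus_w2
      by (auto simp: cost_def potential_def)
  next
    case 3
    have "cost f1 f2 \<le> cost f1 f2 / p"
      using cost_nonneg[of f1 f2] p_pos p_le_1 by (simp add: le_divide_eq mult_left_le)
    moreover have "cost f1 f2 / p \<le> potential v f1 f2"
      using potential_after_Some_nonneg[OF assms next_edge_mem_edges[OF assms 3]]
        potential_after_next_edge[OF assms 3] by simp
    ultimately show ?thesis
      using expected_best_potential_search[OF assms 3] cost_nonneg[of f1 f2]
      by (simp add: ennreal_plus[symmetric])
  qed
qed

lemma best_potential_le_potential:
  assumes "valid_state v f1 f2"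
  shows "best_potential v f1 f2 A \<le> potential v f1 f2"
proof -
  consider "\<not> f1 \<and> \<not> f2 \<and> v = 0" | "f1 \<and> f2" | "\<not> (f1 \<and> f2)" "\<not> (\<not> f1 \<and> \<not> f2 \<and> v = 0)"
    by blast
  thus ?thesis
  proof cases
    case 1
    thus ?thesis using game_value_ge by (simp add: best_potential_def potential_def)
  next
    case 2
    thus ?thesis by (simp add: best_potential_def potential_after_def potential_def)
  next
    case 3
    thus ?thesis
      using potential_after_next_edge[OF assms 3] cost_nonneg[of f1 f2] p_pos
      by (simp add: best_potential_non_root)
  qed
qed

lemma best_potential_le_potential_after:
  assumes "valid_state v f1 f2"
    and "a \<in> insert None (Some ` {j \<in> edges l1 l2. A j \<and> (v = j \<or> v = near j)})"
  shows "best_potential v f1 f2 A \<le> potential_after v f1 f2 a"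
proof -
  consider "a = None" | j where "a = Some j" "j \<in> edges l1 l2" "A j" "v = j \<or> v = near j"
    using assms(2) by blast
  thus ?thesis
  proof cases
    case 1
    thus ?thesis using best_potential_le_potential[OF assms(1)] by (simp add: potential_after_def)
  next
    case 2
    consider "f1 \<and> f2" | "\<not> f1 \<and> \<not> f2 \<and> v = 0"
      | "\<not> (f1 \<and> f2)" "\<not> (\<not> f1 \<and> \<not> f2 \<and> v = 0)" "j = next_edge v f1 f2"
      | "\<not> (f1 \<and> f2)" "\<not> (\<not> f1 \<and> \<not> f2 \<and> v = 0)" "j \<noteq> next_edge v f1 f2"
      by blast
    thus ?thesis
    proof cases
      case 1
      thus ?thesis by (simp add: best_potential_def potential_after_def potential_def)
    next
      case root: 2
      hence "j = 1 \<or> j = -1" using \<open>v = j \<or> v = near j\<close> \<open>j \<in> edges l1 l2\<close>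
        by (auto simp: near_def mem_edges sgn_if split: if_splits)
      thus ?thesis using root 2 potential_after_root by (auto simp: best_potential_def)
    next
      case 3
      hence "A (next_edge v f1 f2)" using 2 by simp
      thus ?thesis using 2 3 by (simp add: best_potential_non_root)
    next
      case 4
      thus ?thesis
        using 2(1) order.trans[OF best_potential_le_potential[OF assms(1)]
            potential_after_other_edge[OF assms(1) 4(1,2) 2(2,4) 4(3)]]
        by simp
    qed
  qed
qed

definition found1 :: "hist \<Rightarrow> bool" where "found1 h \<longleftrightarrow> int l1 \<in> traversed h"
definition found2 :: "hist \<Rightarrow> bool" where "found2 h \<longleftrightarrow> - int l2 \<in> traversed h"

definition hist_potential :: "hist \<Rightarrow> ennreal" where
  "hist_potential h = ennreal (potential (pos h) (found1 h) (found2 h))"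

definition hist_cost :: "hist \<Rightarrow> ennreal" where
  "hist_cost h = ennreal (cost (found1 h) (found2 h))"

lemma found1_snoc [simp]: "found1 (h @ [(A, a)]) \<longleftrightarrow> found1 h \<or> a = Some (int l1)"
  and found2_snoc [simp]: "found2 (h @ [(A, a)]) \<longleftrightarrow> found2 h \<or> a = Some (- int l2)"
  by (auto simp: found1_def found2_def split: option.splits)

lemma hist_potential_Nil: "hist_potential [] = ennreal game_value"
  by (simp add: hist_potential_def potential_def found1_def found2_def)

lemma hist_potential_snoc:
  "hist_potential (h @ [(A, a)]) = ennreal (potential_after (pos h) (found1 h) (found2 h) a)"
  by (simp add: hist_potential_def potential_after_def)

lemma payoff_eps_eq_suminf_hist_cost:
  "payoff_eps l1 l2 p \<sigma> = (\<Sum>n. \<integral>\<^sup>+h. hist_cost h \<partial>hist_pmf l1 l2 p \<sigma> n)"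
proof -
  let ?M = "hist_pmf l1 l2 p \<sigma>"
  have "hist_cost h = ennreal w1 * indicator {h. int l1 \<notin> traversed h} h
      + ennreal w2 * indicator {h. - int l2 \<notin> traversed h} h" for h
    using w1_nonneg w2_nonneg by (auto simp: hist_cost_def cost_def found1_def found2_def ennreal_plus)
  hence "(\<integral>\<^sup>+h. hist_cost h \<partial>?M n) =
      ennreal w1 * (\<integral>\<^sup>+h. indicator {h. int l1 \<notin> traversed h} h \<partial>?M n) +
      ennreal w2 * (\<integral>\<^sup>+h. indicator {h. - int l2 \<notin> traversed h} h \<partial>?M n)" for n
    by (simp add: nn_integral_add nn_integral_cmult)
  hence "(\<Sum>n. \<integral>\<^sup>+h. hist_cost h \<partial>?M n) =
      ennreal w1 * exp_time l1 l2 p \<sigma> (int l1) + ennreal w2 * exp_time l1 l2 p \<sigma> (- int l2)"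
    unfolding exp_time_eq_suminf_nn_integral by (simp add: suminf_add[symmetric])
  thus ?thesis unfolding payoff_eps_def w1_def w2_def L_def by simp
qed

section \<open>No strategy beats the game value\<close>

lemma valid_state_if_admissible:
  assumes "admissible l1 l2 p \<tau>" "reachable l1 l2 p \<tau> h"
  shows "valid_state (pos h) (found1 h) (found2 h)"
  using assms(2)
proof (induction rule: reachable_induct)
  case Nil
  show ?case using l1_ge_1 l2_ge_1 by (simp add: valid_state_def found1_def found2_def)
next
  case (snoc h A a)
  hence "a \<in> legal_acts l1 l2 h A"
    using assms(1) unfolding admissible_def by blast
  then consider "a = None" | j where "a = Some j" "j \<in> edges l1 l2" "pos h = j \<or> pos h = near j"
    unfolding legal_acts_def by blast
  thus ?case
    by cases (use snoc.IH valid_state_step[OF snoc.IH] in auto)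
qed

lemma hist_potential_le_cost_plus_expected:
  assumes "admissible l1 l2 p \<tau>" "reachable l1 l2 p \<tau> h"
  shows "hist_potential h \<le>
    hist_cost h + (\<integral>\<^sup>+A. \<integral>\<^sup>+a. hist_potential (h @ [(A, a)]) \<partial>\<tau> h A \<partial>act l1 l2 p)"
proof -
  let ?v = "pos h" and ?f1 = "found1 h" and ?f2 = "found2 h"
  have valid: "valid_state ?v ?f1 ?f2"
    by (rule valid_state_if_admissible[OF assms])
  have "hist_potential h = hist_cost h + (\<integral>\<^sup>+A. ennreal (best_potential ?v ?f1 ?f2 A) \<partial>act l1 l2 p)"
    using cost_plus_expected_best_potential[OF valid] by (simp add: hist_cost_def hist_potential_def)
  also have "(\<integral>\<^sup>+A. ennreal (best_potential ?v ?f1 ?f2 A) \<partial>act l1 l2 p) \<le>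
      (\<integral>\<^sup>+A. \<integral>\<^sup>+a. hist_potential (h @ [(A, a)]) \<partial>\<tau> h A \<partial>act l1 l2 p)"
  proof (intro nn_integral_mono_AE AE_pmfI)
    fix A assume A: "A \<in> set_pmf (act l1 l2 p)"
    have "ennreal (best_potential ?v ?f1 ?f2 A) = (\<integral>\<^sup>+a. ennreal (best_potential ?v ?f1 ?f2 A) \<partial>\<tau> h A)"
      by simp
    also have "\<dots> \<le> (\<integral>\<^sup>+a. hist_potential (h @ [(A, a)]) \<partial>\<tau> h A)"
    proof (intro nn_integral_mono_AE AE_pmfI)
      fix a assume "a \<in> set_pmf (\<tau> h A)"
      hence "a \<in> legal_acts l1 l2 h A"
        using assms A unfolding admissible_def by blast
      hence "best_potential ?v ?f1 ?f2 A \<le> potential_after ?v ?f1 ?f2 a"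
        using best_potential_le_potential_after[OF valid] by (simp add: legal_acts_def)
      thus "ennreal (best_potential ?v ?f1 ?f2 A) \<le> hist_potential (h @ [(A, a)])"
        by (simp add: hist_potential_snoc ennreal_leI)
    qed
    finally show "ennreal (best_potential ?v ?f1 ?f2 A) \<le>
        (\<integral>\<^sup>+a. hist_potential (h @ [(A, a)]) \<partial>\<tau> h A)" .
  qed
  finally show ?thesis by (simp add: add_left_mono)
qed

theorem payoff_eps_ge_game_value:
  assumes "admissible l1 l2 p \<tau>"
  shows "ennreal game_value \<le> payoff_eps l1 l2 p \<tau>"
proof -
  let ?M = "hist_pmf l1 l2 p \<tau>"
  define r where "r n = enn2real (\<integral>\<^sup>+h. hist_cost h \<partial>?M n)" for n
  have r: "(\<integral>\<^sup>+h. hist_cost h \<partial>?M n) = ennreal (r n)" for n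
  proof -
    have "(\<integral>\<^sup>+h. hist_cost h \<partial>?M n) \<le> (\<integral>\<^sup>+h. 1 \<partial>?M n)"
      by (intro nn_integral_mono) (simp add: hist_cost_def cost_le_1)
    hence "(\<integral>\<^sup>+h. hist_cost h \<partial>?M n) \<noteq> top"
      by (auto simp: top_unique)
    thus ?thesis unfolding r_def by (simp add: less_top)
  qed
  have K: "0 \<le> L * game_value"
    using game_value_nonneg L_pos by simp
  have bound: "ennreal game_value \<le> (\<Sum>k<n. ennreal (r k)) + ennreal (L * game_value) * ennreal (r n)"
    for n
  proof -
    have "ennreal game_value \<le> (\<Sum>k<n. \<integral>\<^sup>+h. hist_cost h \<partial>?M k) + (\<integral>\<^sup>+h. hist_potential h \<partial>?M n)"
      unfolding hist_potential_Nil[symmetric]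
      by (rule sum_cost_plus_potential_ge) (rule hist_potential_le_cost_plus_expected[OF assms])
    also have "(\<integral>\<^sup>+h. hist_potential h \<partial>?M n) \<le> (\<integral>\<^sup>+h. ennreal (L * game_value) * hist_cost h \<partial>?M n)"
    proof (intro nn_integral_mono_AE AE_pmfI)
      fix h assume "h \<in> set_pmf (?M n)"
      hence "valid_state (pos h) (found1 h) (found2 h)"
        using valid_state_if_admissible[OF assms] reachable_if_in_hist_pmf by blast
      thus "hist_potential h \<le> ennreal (L * game_value) * hist_cost h"
        unfolding hist_potential_def hist_cost_def using potential_le_cost K cost_nonneg
        by (simp add: ennreal_mult[symmetric] ennreal_leI)
    qed
    also have "\<dots> = ennreal (L * game_value) * ennreal (r n)"
      by (simp add: nn_integral_cmult r)
    finally show ?thesis by (simp add: r add_left_mono)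
  qed
  have "ennreal game_value \<le> (\<Sum>k. ennreal (r k))"
    by (rule ennreal_le_suminf_of_le_partial_sums[OF _ K bound]) (simp add: r_def)
  thus ?thesis unfolding payoff_eps_eq_suminf_hist_cost r .
qed

section \<open>Depth-first strategies attain the game value\<close>

text \<open>A depth-first search that has traversed the first \<open>a\<close> edges of side 1 and the first \<open>b\<close>
  edges of side 2: it stands at the frontier of the side it is exploring, or walks back along a
  finished side, while the other side is untouched or finished.\<close>
definition dfs_state :: "int \<Rightarrow> int \<Rightarrow> int \<Rightarrow> bool" where
  "dfs_state v a b \<longleftrightarrow> 0 \<le> a \<and> a \<le> int l1 \<and> 0 \<le> b \<and> b \<le> int l2 \<and>
    ((0 \<le> v \<and> v \<le> a \<and> (v = a \<or> a = int l1) \<and> (b = 0 \<or> b = int l2)) \<or>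
     (v \<le> 0 \<and> - v \<le> b \<and> (- v = b \<or> b = int l2) \<and> (a = 0 \<or> a = int l1)))"

definition explored :: "int \<Rightarrow> int \<Rightarrow> int set" where
  "explored a b = {j. 1 \<le> j \<and> j \<le> a \<or> - b \<le> j \<and> j \<le> -1}"

definition dfs_moves :: "int \<Rightarrow> int \<Rightarrow> int \<Rightarrow> (int \<Rightarrow> bool) \<Rightarrow> int option set" where
  "dfs_moves v a b A =
    (if a \<noteq> int l1 \<and> b \<noteq> int l2 \<and> v = 0 then
       (if A 1 \<or> A (-1) then Some ` {j. (j = 1 \<or> j = -1) \<and> A j} else {None})
     else if a = int l1 \<and> b = int l2 then (if v \<noteq> 0 \<and> A v then {Some v} else {None})
     else if A (next_edge v (a = int l1) (b = int l2))
       then {Some (next_edge v (a = int l1) (b = int l2))} else {None})"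

lemma mem_explored: "j \<in> explored a b \<longleftrightarrow> 1 \<le> j \<and> j \<le> a \<or> - b \<le> j \<and> j \<le> -1"
  by (simp add: explored_def)

lemma dfs_state_root: "dfs_state 0 0 0"
  by (simp add: dfs_state_def)

lemma explored_0_0 [simp]: "explored 0 0 = {}"
  by (auto simp: explored_def)

lemma dfs_state_cases [consumes 1, case_names pos neg zero]:
  assumes "dfs_state v a b"
  obtains "v > 0" "v \<le> a" "v = a \<or> a = int l1" "b = 0 \<or> b = int l2" "a \<le> int l1" "0 \<le> b" "b \<le> int l2"
  | "v < 0" "- v \<le> b" "- v = b \<or> b = int l2" "a = 0 \<or> a = int l1" "b \<le> int l2" "0 \<le> a" "a \<le> int l1"
  | "v = 0" "a = 0 \<or> a = int l1" "b = 0 \<or> b = int l2"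
  using assms unfolding dfs_state_def by (cases "v > 0"; cases "v < 0") auto

lemma dfs_state_valid_state: "dfs_state v a b \<Longrightarrow> valid_state v (a = int l1) (b = int l2)"
  by (auto simp: dfs_state_def valid_state_def)

lemma leaves_mem_explored:
  "dfs_state v a b \<Longrightarrow> (int l1 \<in> explored a b \<longleftrightarrow> a = int l1) \<and> (- int l2 \<in> explored a b \<longleftrightarrow> b = int l2)"
  using l1_ge_1 l2_ge_1 by (auto simp: dfs_state_def explored_def)

lemma out_edges:
  "{j \<in> edges l1 l2. near j = v} =
    (if 0 \<le> v \<and> v < int l1 then {v + 1} else {}) \<union> (if - int l2 < v \<and> v \<le> 0 then {v - 1} else {})"
  by (auto simp: mem_edges near_def sgn_if split: if_splits)

lemma untraversed_out_edges_dfs_state: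
  assumes "dfs_state v a b"
  shows "{j \<in> edges l1 l2. near j = v \<and> j \<notin> explored a b} =
    (if a \<noteq> int l1 \<and> b \<noteq> int l2 \<and> v = 0 then {1, -1}
     else if a = int l1 \<and> b = int l2 \<or> next_edge v (a = int l1) (b = int l2) = v then {}
     else {next_edge v (a = int l1) (b = int l2)})"
proof -
  have eq: "{j \<in> edges l1 l2. near j = v \<and> j \<notin> explored a b} =
      {j \<in> edges l1 l2. near j = v} - explored a b"
    by blast
  have "1 \<le> int l1" "1 \<le> int l2"
    using l1_ge_1 l2_ge_1 by simp_all
  with assms show ?thesis
    unfolding eq out_edges
    by (cases rule: dfs_state_cases) (auto simp: explored_def next_edge_def)
qed

lemma dfs_acts_eq_dfs_moves:
  assumes "dfs_state (pos h) a b" "traversed h = explored a b"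
  shows "dfs_acts l1 l2 h A = dfs_moves (pos h) a b A"
proof -
  let ?v = "pos h" and ?t = "next_edge (pos h) (a = int l1) (b = int l2)"
  have untrav: "untrav_out l1 l2 h =
    (if a \<noteq> int l1 \<and> b \<noteq> int l2 \<and> ?v = 0 then {1, -1}
     else if a = int l1 \<and> b = int l2 \<or> ?t = ?v then {} else {?t})"
    unfolding untrav_out_def assms(2) by (rule untraversed_out_edges_dfs_state[OF assms(1)])
  have "?t \<noteq> 0"
    by (auto simp: next_edge_def)
  consider "a \<noteq> int l1 \<and> b \<noteq> int l2 \<and> ?v = 0" | "a = int l1 \<and> b = int l2"
    | "\<not> (a \<noteq> int l1 \<and> b \<noteq> int l2 \<and> ?v = 0)" "\<not> (a = int l1 \<and> b = int l2)"
    by blast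
  thus ?thesis
  proof cases
    case 1
    thus ?thesis by (auto simp: dfs_acts_def dfs_moves_def untrav Let_def)
  next
    case 2
    thus ?thesis by (simp add: dfs_acts_def dfs_moves_def untrav Let_def)
  next
    case 3
    thus ?thesis using \<open>?t \<noteq> 0\<close> by (auto simp: dfs_acts_def dfs_moves_def untrav Let_def)
  qed
qed

lemma dfs_state_step:
  assumes "dfs_state v a b" "x \<in> dfs_moves v a b A"
  defines "a' \<equiv> if x = Some (a + 1) then a + 1 else a"
    and "b' \<equiv> if x = Some (- b - 1) then b + 1 else b"
  shows "explored a b \<union> set_option x = explored a' b'" and "dfs_state (step v x) a' b'"
proof -
  have "1 \<le> int l1" "1 \<le> int l2"
    using l1_ge_1 l2_ge_1 by simp_all
  with assms(1) have "explored a b \<union> set_option x = explored a' b' \<and> dfs_state (step v x) a' b'"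
    by (cases rule: dfs_state_cases)
      (use assms(2) in \<open>auto simp: dfs_moves_def next_edge_def a'_def b'_def explored_def
        dfs_state_def step_def near_def split: if_splits\<close>)
  thus "explored a b \<union> set_option x = explored a' b'" "dfs_state (step v x) a' b'"
    by simp_all
qed

lemma dfs_state_if_reachable:
  assumes "is_dfs l1 l2 p \<sigma>" "reachable l1 l2 p \<sigma> h"
  shows "\<exists>a b. traversed h = explored a b \<and> dfs_state (pos h) a b"
  using assms(2)
proof (induction rule: reachable_induct)
  case Nil
  show ?case by (intro exI[of _ 0]) (simp add: dfs_state_root)
next
  case (snoc h A x)
  then obtain a b where ab: "traversed h = explored a b" "dfs_state (pos h) a b"
    by blast
  have "x \<in> dfs_acts l1 l2 h A"
    using assms(1) snoc unfolding is_dfs_def by blast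
  hence "x \<in> dfs_moves (pos h) a b A"
    using dfs_acts_eq_dfs_moves[OF ab(2,1)] by simp
  from dfs_state_step[OF ab(2) this] show ?case
    unfolding traversed_snoc pos_snoc snd_conv ab(1) by blast
qed

lemma potential_after_dfs_move:
  assumes "dfs_state v a b" "x \<in> dfs_moves v a b A"
  shows "potential_after v (a = int l1) (b = int l2) x = best_potential v (a = int l1) (b = int l2) A"
proof -
  consider "a \<noteq> int l1 \<and> b \<noteq> int l2 \<and> v = 0" | "a = int l1 \<and> b = int l2"
    | "\<not> (a \<noteq> int l1 \<and> b \<noteq> int l2 \<and> v = 0)" "\<not> (a = int l1 \<and> b = int l2)"
    by blast
  thus ?thesis
  proof cases
    case 1
    hence best: "best_potential v (a = int l1) (b = int l2) A =
        (if A 1 \<or> A (-1) then (L - 1) / p else game_value)"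
      by (simp add: best_potential_def)
    show ?thesis
    proof (cases "A 1 \<or> A (-1)")
      case True
      then obtain j where "x = Some j" "j = 1 \<or> j = -1"
        using 1 assms(2) by (auto simp: dfs_moves_def)
      thus ?thesis using 1 True best potential_after_root by simp
    next
      case False
      hence "x = None" using 1 assms(2) by (simp add: dfs_moves_def)
      thus ?thesis using 1 False best by (simp add: potential_def)
    qed
  next
    case 2
    thus ?thesis by (simp add: best_potential_def potential_after_def potential_def)
  next
    case 3
    thus ?thesis
      using assms(2) by (auto simp: dfs_moves_def best_potential_non_root potential_after_def)
  qed
qed

lemma cost_plus_expected_eq_hist_potential_dfs:
  assumes "is_dfs l1 l2 p \<sigma>" "reachable l1 l2 p \<sigma> h"
  shows "hist_cost h + (\<integral>\<^sup>+A. \<integral>\<^sup>+x. hist_potential (h @ [(A, x)]) \<partial>\<sigma> h A \<partial>act l1 l2 p) =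
    hist_potential h"
proof -
  obtain a b where ab: "traversed h = explored a b" "dfs_state (pos h) a b"
    using dfs_state_if_reachable[OF assms] by blast
  have found: "found1 h = (a = int l1)" "found2 h = (b = int l2)"
    using leaves_mem_explored[OF ab(2)] ab(1) by (auto simp: found1_def found2_def)
  let ?best = "\<lambda>A. best_potential (pos h) (found1 h) (found2 h) A"
  have "(\<integral>\<^sup>+A. \<integral>\<^sup>+x. hist_potential (h @ [(A, x)]) \<partial>\<sigma> h A \<partial>act l1 l2 p) =
      (\<integral>\<^sup>+A. ennreal (?best A) \<partial>act l1 l2 p)"
  proof (intro nn_integral_cong_AE AE_pmfI)
    fix A assume A: "A \<in> set_pmf (act l1 l2 p)"
    have "(\<integral>\<^sup>+x. hist_potential (h @ [(A, x)]) \<partial>\<sigma> h A) = (\<integral>\<^sup>+x. ennreal (?best A) \<partial>\<sigma> h A)"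
    proof (intro nn_integral_cong_AE AE_pmfI)
      fix x assume "x \<in> set_pmf (\<sigma> h A)"
      hence "x \<in> dfs_moves (pos h) a b A"
        using assms A dfs_acts_eq_dfs_moves[OF ab(2,1)] unfolding is_dfs_def by blast
      thus "hist_potential (h @ [(A, x)]) = ennreal (?best A)"
        using potential_after_dfs_move[OF ab(2)] found by (simp add: hist_potential_snoc)
    qed
    thus "(\<integral>\<^sup>+x. hist_potential (h @ [(A, x)]) \<partial>\<sigma> h A) = ennreal (?best A)"
      by simp
  qed
  thus ?thesis
    using cost_plus_expected_best_potential[OF dfs_state_valid_state[OF ab(2)]] found
    by (simp add: hist_cost_def hist_potential_def)
qed

theorem payoff_eps_le_game_value:
  assumes "is_dfs l1 l2 p \<sigma>"
  shows "payoff_eps l1 l2 p \<sigma> \<le> ennreal game_value"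
  unfolding payoff_eps_eq_suminf_hist_cost hist_potential_Nil[symmetric]
  by (rule suminf_cost_le_potential)
    (simp add: cost_plus_expected_eq_hist_potential_dfs[OF assms])

lemma uniform_dfs_eq_pmf_of_set_dfs_moves:
  "dfs_state (pos h) a b \<Longrightarrow> traversed h = explored a b \<Longrightarrow>
    uniform_dfs l1 l2 h A = pmf_of_set (dfs_moves (pos h) a b A)"
  by (simp add: uniform_dfs_def dfs_acts_eq_dfs_moves)

end

section \<open>The uniform depth-first strategy finds every edge within the game value\<close>

text \<open>\<open>F v T\<close> is a candidate bound for the expected time until the uniform depth-first strategy
  traverses \<open>e\<close>, from vertex \<open>v\<close> with traversed edges \<open>T\<close>: it drops by \<open>1 / p\<close> with every
  forced depth-first step, and at the start it exceeds the average over the two first moves by the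
  expected wait \<open>1 / (p * (2 - p))\<close>.\<close>
locale uniform_dfs_potential = path_search +
  fixes e :: int and F :: "int \<Rightarrow> int set \<Rightarrow> real"
  assumes e_mem_edges: "e \<in> edges l1 l2"
    and F_found: "\<And>v T. e \<in> T \<Longrightarrow> F v T = 0"
    and F_nonneg: "\<And>v a b. dfs_state v a b \<Longrightarrow> 0 \<le> F v (explored a b)"
    and F_next_edge: "\<And>v a b. dfs_state v a b \<Longrightarrow> \<not> (a \<noteq> int l1 \<and> b \<noteq> int l2 \<and> v = 0) \<Longrightarrow>
      e \<notin> explored a b \<Longrightarrow>
      F (step v (Some (next_edge v (a = int l1) (b = int l2))))
        (insert (next_edge v (a = int l1) (b = int l2)) (explored a b)) = F v (explored a b) - 1 / p"
    and F_root: "F 0 {} = 1 / (p * (2 - p)) + (F 1 {1} + F (-1) {-1}) / 2"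
begin

lemma expected_F_non_root:
  assumes "dfs_state v a b" "\<not> (a \<noteq> int l1 \<and> b \<noteq> int l2 \<and> v = 0)" "e \<notin> explored a b"
  shows "1 + (\<integral>\<^sup>+A. \<integral>\<^sup>+x. ennreal (F (step v x) (explored a b \<union> set_option x))
      \<partial>pmf_of_set (dfs_moves v a b A) \<partial>act l1 l2 p) = ennreal (F v (explored a b))"
proof -
  let ?t = "next_edge v (a = int l1) (b = int l2)" and ?F = "F v (explored a b)"
  have not_done: "\<not> (a = int l1 \<and> b = int l2)"
    using assms(3) e_mem_edges by (auto simp: explored_def mem_edges)
  have t: "?t \<in> edges l1 l2"
    using next_edge_mem_edges(1)[OF dfs_state_valid_state[OF assms(1)] not_done] assms(2) by blast
  have moves: "dfs_moves v a b A = (if A ?t then {Some ?t} else {None})" for A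
    unfolding dfs_moves_def by (simp only: if_not_P[OF assms(2)] if_not_P[OF not_done])
  have "Some ?t \<in> dfs_moves v a b (\<lambda>_. True)"
    using moves by simp
  note next_state = dfs_state_step[OF assms(1) this]
  have next_nonneg: "0 \<le> ?F - 1 / p"
    using F_nonneg[OF next_state(2)] next_state(1)[symmetric] F_next_edge[OF assms] by simp
  have "1 \<le> 1 / p"
    using p_pos p_le_1 by simp
  with next_nonneg have one_le: "1 \<le> ?F"
    by linarith
  have "(\<integral>\<^sup>+x. ennreal (F (step v x) (explored a b \<union> set_option x)) \<partial>pmf_of_set (dfs_moves v a b A)) =
      ennreal (if A ?t then ?F - 1 / p else ?F)" for A
    by (cases "A ?t") (simp_all add: moves pmf_of_set_singleton F_next_edge[OF assms])
  hence "(\<integral>\<^sup>+A. \<integral>\<^sup>+x. ennreal (F (step v x) (explored a b \<union> set_option x))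
      \<partial>pmf_of_set (dfs_moves v a b A) \<partial>act l1 l2 p) =
      (\<integral>\<^sup>+A. ennreal ((\<lambda>c. if c then ?F - 1 / p else ?F) (A ?t)) \<partial>act l1 l2 p)"
    by simp
  also have "\<dots> = ennreal (p * (?F - 1 / p) + (1 - p) * ?F)"
    using next_nonneg F_nonneg[OF assms(1)] p_pos p_le_1
    by (subst nn_integral_act_component[OF t]) auto
  also have "p * (?F - 1 / p) + (1 - p) * ?F = ?F - 1"
    using p_pos by (simp add: field_simps)
  finally show ?thesis
    using one_le by (simp add: one_plus_ennreal_diff)
qed

lemma F_first_move_nonneg: "0 \<le> F 1 {1}" "0 \<le> F (-1) {-1}"
proof -
  have "dfs_state 1 1 0" "dfs_state (-1) 0 1" "explored 1 0 = {1}" "explored 0 1 = {-1}"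
    using l1_ge_1 l2_ge_1 by (auto simp: dfs_state_def explored_def)
  thus "0 \<le> F 1 {1}" "0 \<le> F (-1) {-1}"
    by (metis F_nonneg)+
qed

lemma expected_F_first_move:
  "(\<integral>\<^sup>+x. ennreal (F (step 0 x) (set_option x)) \<partial>pmf_of_set (dfs_moves 0 0 0 A)) =
    ennreal (if A 1 \<and> A (-1) then (F 1 {1} + F (-1) {-1}) / 2 else if A 1 then F 1 {1}
      else if A (-1) then F (-1) {-1} else F 0 {})"
proof -
  have "dfs_moves 0 0 0 A = (if A 1 \<and> A (-1) then {Some 1, Some (-1)} else if A 1 then {Some 1}
      else if A (-1) then {Some (-1)} else {None})"
    using l1_ge_1 l2_ge_1 by (auto simp: dfs_moves_def)
  moreover have "(ennreal (F 1 {1}) + ennreal (F (-1) {-1})) / 2 = ennreal (F 1 {1} + F (-1) {-1}) / ennreal 2"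
    using F_first_move_nonneg by (simp add: ennreal_plus)
  moreover have "\<dots> = ennreal ((F 1 {1} + F (-1) {-1}) / 2)"
    using F_first_move_nonneg by (intro divide_ennreal) auto
  moreover have "x / 1 = x" for x :: ennreal
    by (simp add: divide_ennreal_def)
  ultimately show ?thesis
    by (auto simp: nn_integral_pmf_of_set step_def near_def)
qed

lemma expected_F_root:
  "1 + (\<integral>\<^sup>+A. \<integral>\<^sup>+x. ennreal (F (step 0 x) (set_option x))
      \<partial>pmf_of_set (dfs_moves 0 0 0 A) \<partial>act l1 l2 p) = ennreal (F 0 {})"
proof -
  define g where "g c d = (if c \<and> d then (F 1 {1} + F (-1) {-1}) / 2 else if c then F 1 {1}
    else if d then F (-1) {-1} else F 0 {})" for c d
  have g: "0 \<le> g c d" for c d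
    using F_first_move_nonneg F_nonneg[OF dfs_state_root] by (simp add: g_def)
  have edges: "1 \<in> edges l1 l2" "-1 \<in> edges l1 l2"
    using l1_ge_1 l2_ge_1 by (auto simp: mem_edges)
  have "1 \<le> F 0 {}"
    using F_root F_first_move_nonneg one_le_expected_root_wait by (simp add: add_increasing2)
  have "(\<integral>\<^sup>+A. \<integral>\<^sup>+x. ennreal (F (step 0 x) (set_option x))
      \<partial>pmf_of_set (dfs_moves 0 0 0 A) \<partial>act l1 l2 p) = (\<integral>\<^sup>+A. ennreal (g (A 1) (A (-1))) \<partial>act l1 l2 p)"
    by (simp add: expected_F_first_move g_def)
  also have "\<dots> = ennreal (p * (p * g True True + (1 - p) * g True False)
      + (1 - p) * (p * g False True + (1 - p) * g False False))"
    using p_pos p_le_1 g by (intro nn_integral_act_pair[OF edges]) auto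
  also have "p * (p * g True True + (1 - p) * g True False)
      + (1 - p) * (p * g False True + (1 - p) * g False False) = F 0 {} - 1"
    using p_pos p_le_1 F_root unfolding g_def by (simp add: field_simps)
  finally show ?thesis
    using \<open>1 \<le> F 0 {}\<close> by (simp add: one_plus_ennreal_diff)
qed

lemma expected_F_stage:
  assumes "reachable l1 l2 p (uniform_dfs l1 l2) h"
  shows "indicator {h. e \<notin> traversed h} h
      + (\<integral>\<^sup>+A. \<integral>\<^sup>+x. ennreal (F (pos (h @ [(A, x)])) (traversed (h @ [(A, x)])))
          \<partial>uniform_dfs l1 l2 h A \<partial>act l1 l2 p)
    \<le> ennreal (F (pos h) (traversed h))"
proof -
  obtain a b where ab: "traversed h = explored a b" "dfs_state (pos h) a b"
    using dfs_state_if_reachable[OF is_dfs_uniform_dfs assms] by blast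
  have \<sigma>: "uniform_dfs l1 l2 h A = pmf_of_set (dfs_moves (pos h) a b A)" for A
    by (rule uniform_dfs_eq_pmf_of_set_dfs_moves[OF ab(2,1)])
  consider "e \<in> explored a b" | "e \<notin> explored a b" "a \<noteq> int l1 \<and> b \<noteq> int l2 \<and> pos h = 0"
    | "e \<notin> explored a b" "\<not> (a \<noteq> int l1 \<and> b \<noteq> int l2 \<and> pos h = 0)"
    by blast
  thus ?thesis
  proof cases
    case 1
    thus ?thesis using ab(1) by (simp add: F_found)
  next
    case 2
    hence "a = 0" "b = 0" using ab(2) by (auto simp: dfs_state_def)
    thus ?thesis
      using 2 ab expected_F_root by (simp add: \<sigma>)
  next
    case 3
    thus ?thesis
      using ab expected_F_non_root[OF ab(2) 3(2,1)] by (simp add: \<sigma>)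
  qed
qed

lemma exp_time_uniform_dfs_le: "exp_time l1 l2 p (uniform_dfs l1 l2) e \<le> ennreal (F 0 {})"
proof -
  have "(\<Sum>n. \<integral>\<^sup>+h. indicator {h. e \<notin> traversed h} h \<partial>hist_pmf l1 l2 p (uniform_dfs l1 l2) n)
      \<le> ennreal (F (pos []) (traversed []))"
    by (rule suminf_cost_le_potential) (rule expected_F_stage)
  thus ?thesis unfolding exp_time_eq_suminf_nn_integral by simp
qed

end

context path_search
begin

text \<open>The expected remaining time until the uniform depth-first strategy traverses the edge \<open>k\<close>
  of side 1, from \<open>v\<close> with traversed edges \<open>T\<close>: \<open>1 / p\<close> for each edge still to be walked, plus
  the expected wait at the start.\<close>
definition find_time_pos :: "int \<Rightarrow> int \<Rightarrow> int set \<Rightarrow> real" where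
  "find_time_pos k v T =
    (if k \<in> T then 0
     else if v = 0 \<and> -1 \<notin> T then 1 / (p * (2 - p)) + (real_of_int k - 1 + real l2) / p
     else if v < 0 \<and> - int l2 \<notin> T then (2 * real l2 + real_of_int v + real_of_int k) / p
     else (real_of_int k - real_of_int v) / p)"

lemma find_time_pos_nonneg:
  assumes "1 \<le> k" "dfs_state v a b"
  shows "0 \<le> find_time_pos k v (explored a b)"
proof (cases "k \<in> explored a b")
  case False
  hence "a < k" using assms(1) by (auto simp: mem_explored)
  moreover have "- int l2 \<le> v" "v \<le> a" using assms(2) by (auto simp: dfs_state_def)
  ultimately show ?thesis
    using False assms(1) p_pos p_le_1 by (simp add: find_time_pos_def)
qed (simp add: find_time_pos_def)

lemma find_time_pos_next_edge:
  assumes k: "1 \<le> k" "k \<le> int l1" and state: "dfs_state v a b"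
    and "\<not> (a \<noteq> int l1 \<and> b \<noteq> int l2 \<and> v = 0)" and k_new: "k \<notin> explored a b"
  defines "t \<equiv> next_edge v (a = int l1) (b = int l2)"
  shows "find_time_pos k (step v (Some t)) (insert t (explored a b)) =
    find_time_pos k v (explored a b) - 1 / p"
proof -
  have "a < k" using k_new k by (auto simp: mem_explored)
  hence a: "a \<noteq> int l1" using k by auto
  from state show ?thesis
  proof (cases rule: dfs_state_cases)
    case pos
    hence "t = v + 1" "v = a" using a by (auto simp: t_def next_edge_def)
    thus ?thesis
      using k_new pos p_pos by (cases "k = v + 1") (auto simp: find_time_pos_def step_def field_simps)
  next
    case neg
    show ?thesis
    proof (cases "b = int l2")
      case True
      hence "t = v" using a neg by (simp add: t_def next_edge_def)
      moreover have "v \<in> explored a b" "- int l2 \<in> explored a b" "-1 \<in> explored a b"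
        using True neg l2_ge_1 by (auto simp: mem_explored)
      ultimately show ?thesis
        using k_new neg p_pos
        by (auto simp: find_time_pos_def step_def near_def insert_absorb field_simps)
    next
      case False
      hence "t = v - 1" "- v = b" using a neg by (auto simp: t_def next_edge_def)
      moreover have "- int l2 \<notin> explored a b"
        using False neg by (auto simp: mem_explored)
      moreover have "k \<notin> insert (v - 1) (explored a b)"
        using k_new neg k by simp
      moreover have "v - 1 = - int l2 \<Longrightarrow> real_of_int v = 1 - real l2"
        by linarith
      ultimately show ?thesis
        using neg p_pos by (auto simp: find_time_pos_def step_def near_def field_simps)
    qed
  next
    case zero
    hence "a = 0" "b = int l2" using a \<open>\<not> (a \<noteq> int l1 \<and> b \<noteq> int l2 \<and> v = 0)\<close> by auto
    hence "t = 1" "-1 \<in> explored a b"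
      using zero l1_ge_1 l2_ge_1 by (auto simp: t_def next_edge_def mem_explored)
    thus ?thesis
      using k_new zero p_pos
      by (cases "k = 1") (auto simp: find_time_pos_def step_def field_simps)
  qed
qed

lemma find_time_pos_root:
  assumes "1 \<le> k"
  shows "find_time_pos k 0 {} =
    1 / (p * (2 - p)) + (find_time_pos k 1 {1} + find_time_pos k (-1) {-1}) / 2"
proof -
  have "find_time_pos k 1 {1} = (real_of_int k - 1) / p"
    by (simp add: find_time_pos_def)
  moreover have "find_time_pos k (-1) {-1} = (2 * real l2 - 1 + real_of_int k) / p"
    unfolding find_time_pos_def using assms by (cases "l2 = 1") auto
  ultimately show ?thesis
    using p_pos by (simp add: find_time_pos_def field_simps)
qed

lemma exp_time_uniform_dfs_pos:
  assumes "1 \<le> k" "k \<le> int l1"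
  shows "exp_time l1 l2 p (uniform_dfs l1 l2) k \<le> ennreal game_value"
proof -
  have "uniform_dfs_potential l1 l2 p k (find_time_pos k)"
  proof (intro uniform_dfs_potential.intro uniform_dfs_potential_axioms.intro path_search_axioms)
    show "k \<in> edges l1 l2"
      using assms by (simp add: mem_edges)
  next
    fix v T assume "k \<in> T"
    thus "find_time_pos k v T = 0" by (simp add: find_time_pos_def)
  next
    fix v a b assume "dfs_state v a b"
    thus "0 \<le> find_time_pos k v (explored a b)"
      by (rule find_time_pos_nonneg[OF assms(1)])
  next
    fix v a b assume "dfs_state v a b" "\<not> (a \<noteq> int l1 \<and> b \<noteq> int l2 \<and> v = 0)" "k \<notin> explored a b"
    thus "find_time_pos k (step v (Some (next_edge v (a = int l1) (b = int l2))))
        (insert (next_edge v (a = int l1) (b = int l2)) (explored a b)) =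
      find_time_pos k v (explored a b) - 1 / p"
      by (rule find_time_pos_next_edge[OF assms])
  qed (rule find_time_pos_root[OF assms(1)])
  then interpret uniform_dfs_potential l1 l2 p k "find_time_pos k" .
  have "find_time_pos k 0 {} \<le> game_value"
    using assms p_pos by (simp add: find_time_pos_def game_value_def L_eq divide_right_mono)
  thus ?thesis
    using exp_time_uniform_dfs_le by (meson ennreal_leI order.trans)
qed

definition find_time_neg :: "int \<Rightarrow> int \<Rightarrow> int set \<Rightarrow> real" where
  "find_time_neg k v T =
    (if - k \<in> T then 0
     else if v = 0 \<and> 1 \<notin> T then 1 / (p * (2 - p)) + (real_of_int k - 1 + real l1) / p
     else if v > 0 \<and> int l1 \<notin> T then (2 * real l1 - real_of_int v + real_of_int k) / p
     else (real_of_int k + real_of_int v) / p)"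

lemma find_time_neg_nonneg:
  assumes "1 \<le> k" "dfs_state v a b"
  shows "0 \<le> find_time_neg k v (explored a b)"
proof (cases "- k \<in> explored a b")
  case False
  hence "b < k" using assms(1) by (auto simp: mem_explored)
  moreover have "v \<le> int l1" "- v \<le> b" using assms(2) by (auto simp: dfs_state_def)
  ultimately show ?thesis
    using False assms(1) p_pos p_le_1 by (simp add: find_time_neg_def)
qed (simp add: find_time_neg_def)

lemma find_time_neg_next_edge:
  assumes k: "1 \<le> k" "k \<le> int l2" and state: "dfs_state v a b"
    and "\<not> (a \<noteq> int l1 \<and> b \<noteq> int l2 \<and> v = 0)" and k_new: "- k \<notin> explored a b"
  defines "t \<equiv> next_edge v (a = int l1) (b = int l2)"
  shows "find_time_neg k (step v (Some t)) (insert t (explored a b)) =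
    find_time_neg k v (explored a b) - 1 / p"
proof -
  have "b < k" using k_new k by (auto simp: mem_explored)
  hence b: "b \<noteq> int l2" using k by auto
  from state show ?thesis
  proof (cases rule: dfs_state_cases)
    case neg
    hence "t = v - 1" "- v = b" using b by (auto simp: t_def next_edge_def)
    moreover have "- k = v - 1 \<Longrightarrow> real_of_int k = 1 - real_of_int v"
      by linarith
    ultimately show ?thesis
      using k_new neg p_pos by (auto simp: find_time_neg_def step_def near_def field_simps)
  next
    case pos
    show ?thesis
    proof (cases "a = int l1")
      case True
      hence "t = v" using b pos by (simp add: t_def next_edge_def)
      moreover have "v \<in> explored a b" "int l1 \<in> explored a b" "1 \<in> explored a b"
        using True pos l1_ge_1 by (auto simp: mem_explored)
      ultimately show ?thesis
        using k_new pos p_pos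
        by (auto simp: find_time_neg_def step_def near_def insert_absorb field_simps)
    next
      case False
      hence "t = v + 1" "v = a" using b pos by (auto simp: t_def next_edge_def)
      moreover have "int l1 \<notin> explored a b"
        using False pos by (auto simp: mem_explored)
      moreover have "- k \<notin> insert (v + 1) (explored a b)"
        using k_new pos k by simp
      ultimately show ?thesis
      proof (cases "v + 1 = int l1")
        case True
        have "find_time_neg k (step v (Some t)) (insert t (explored a b)) =
            (real_of_int k + real_of_int v + 1) / p"
          using True \<open>t = v + 1\<close> \<open>- k \<notin> insert (v + 1) (explored a b)\<close> pos
          by (simp add: find_time_neg_def step_def add_ac)
        moreover have "find_time_neg k v (explored a b) = (2 * real l1 - real_of_int v + real_of_int k) / p"
          using k_new pos \<open>int l1 \<notin> explored a b\<close> by (simp add: find_time_neg_def)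
        moreover have "real l1 = real_of_int v + 1"
          using True by linarith
        ultimately show ?thesis
          using p_pos by (simp only:) (simp add: field_simps)
      qed (use pos p_pos in \<open>auto simp: find_time_neg_def step_def field_simps\<close>)
    qed
  next
    case zero
    hence "b = 0" "a = int l1" using b \<open>\<not> (a \<noteq> int l1 \<and> b \<noteq> int l2 \<and> v = 0)\<close> by auto
    hence "t = -1" "1 \<in> explored a b"
      using zero l1_ge_1 l2_ge_1 by (auto simp: t_def next_edge_def mem_explored)
    thus ?thesis
      using k_new zero p_pos
      by (cases "k = 1") (auto simp: find_time_neg_def step_def near_def field_simps)
  qed
qed

lemma find_time_neg_root:
  assumes "1 \<le> k"
  shows "find_time_neg k 0 {} =
    1 / (p * (2 - p)) + (find_time_neg k 1 {1} + find_time_neg k (-1) {-1}) / 2"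
proof -
  have "find_time_neg k (-1) {-1} = (real_of_int k - 1) / p"
    by (simp add: find_time_neg_def)
  moreover have "find_time_neg k 1 {1} = (2 * real l1 - 1 + real_of_int k) / p"
    unfolding find_time_neg_def using assms by (cases "l1 = 1") auto
  ultimately show ?thesis
    using p_pos by (simp add: find_time_neg_def field_simps)
qed

lemma exp_time_uniform_dfs_neg:
  assumes "1 \<le> k" "k \<le> int l2"
  shows "exp_time l1 l2 p (uniform_dfs l1 l2) (- k) \<le> ennreal game_value"
proof -
  have "uniform_dfs_potential l1 l2 p (- k) (find_time_neg k)"
  proof (intro uniform_dfs_potential.intro uniform_dfs_potential_axioms.intro path_search_axioms)
    show "- k \<in> edges l1 l2"
      using assms by (simp add: mem_edges)
  next
    fix v T assume "- k \<in> T"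
    thus "find_time_neg k v T = 0" by (simp add: find_time_neg_def)
  next
    fix v a b assume "dfs_state v a b"
    thus "0 \<le> find_time_neg k v (explored a b)"
      by (rule find_time_neg_nonneg[OF assms(1)])
  next
    fix v a b assume "dfs_state v a b" "\<not> (a \<noteq> int l1 \<and> b \<noteq> int l2 \<and> v = 0)" "- k \<notin> explored a b"
    thus "find_time_neg k (step v (Some (next_edge v (a = int l1) (b = int l2))))
        (insert (next_edge v (a = int l1) (b = int l2)) (explored a b)) =
      find_time_neg k v (explored a b) - 1 / p"
      by (rule find_time_neg_next_edge[OF assms])
  qed (rule find_time_neg_root[OF assms(1)])
  then interpret uniform_dfs_potential l1 l2 p "- k" "find_time_neg k" .
  have "find_time_neg k 0 {} \<le> game_value"
    using assms p_pos by (simp add: find_time_neg_def game_value_def L_eq divide_right_mono)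
  thus ?thesis
    using exp_time_uniform_dfs_le by (meson ennreal_leI order.trans)
qed

lemma exp_time_uniform_dfs_le_game_value:
  assumes "e \<in> edges l1 l2"
  shows "exp_time l1 l2 p (uniform_dfs l1 l2) e \<le> ennreal game_value"
proof (cases "e > 0")
  case True
  thus ?thesis using assms exp_time_uniform_dfs_pos by (simp add: mem_edges)
next
  case False
  thus ?thesis using assms exp_time_uniform_dfs_neg[of "- e"] by (simp add: mem_edges)
qed

end

theorem mainTheorem11:
  fixes l1 l2 :: nat and p :: real
  assumes "l1 \<ge> 1" and "l2 \<ge> 1" and "0 < p" and "p \<le> 1"
  shows "(\<forall>\<sigma> \<tau>. is_dfs l1 l2 p \<sigma> \<longrightarrow> admissible l1 l2 p \<tau> \<longrightarrow>
            payoff_eps l1 l2 p \<sigma> \<le> payoff_eps l1 l2 p \<tau>)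
       \<and> is_dfs l1 l2 p (uniform_dfs l1 l2)
       \<and> (\<forall>e \<in> edges l1 l2. exp_time l1 l2 p (uniform_dfs l1 l2) e
                              \<le> payoff_eps l1 l2 p (uniform_dfs l1 l2))
       \<and> (\<forall>\<tau>. admissible l1 l2 p \<tau> \<longrightarrow>
              payoff_eps l1 l2 p (uniform_dfs l1 l2) \<le> payoff_eps l1 l2 p \<tau>)"
proof -
  interpret path_search l1 l2 p
    using assms by unfold_locales
  have best_response: "payoff_eps l1 l2 p \<sigma> \<le> payoff_eps l1 l2 p \<tau>"
    if "is_dfs l1 l2 p \<sigma>" "admissible l1 l2 p \<tau>" for \<sigma> \<tau>
    using payoff_eps_le_game_value[OF that(1)] payoff_eps_ge_game_value[OF that(2)] by order
  have uniform_value: "ennreal game_value \<le> payoff_eps l1 l2 p (uniform_dfs l1 l2)"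
    by (rule payoff_eps_ge_game_value[OF admissible_if_is_dfs[OF is_dfs_uniform_dfs]])
  show ?thesis
    using best_response is_dfs_uniform_dfs
      order.trans[OF exp_time_uniform_dfs_le_game_value uniform_value]
    by blast
qed

end
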